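(* Let $L$ be a finite distributive lattice and let $m$ be the maximum size of an antichain in $\operatorname{Mi}(L)$. Then for every $k\ge0$, $$q_k(L)=\sum_{j=k}^m\binom jk d_j^-(L),\qquad d_k^-(L)=\sum_{j=k}^m(-1)^{j-k}\binom jk q_j(L).$$
   Context: $\operatorname{Mi}(L)$ is the set of meet-irreducible elements of $L$, as a poset under the order of $L$. For a finite lattice $M$ and $k\ge0$, $q_k(M)$ is the number of convex sublattices (intervals) of $M$ isomorphic to the Boolean lattice $\mathbf{B}_k$ with $2^k$ elements. For $a\in M$, $\deg^-_M(a)$ is the number of elements of $M$ covering $a$, and $d_k^-(M)$ is the number of $a\in M$ with $\deg^-_M(a)=k$. *)

theory Defs
  imports Main
begin

definition meet_irreducible :: "'a::lattice \<Rightarrow> bool" where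
  "meet_irreducible a \<longleftrightarrow> (\<exists>x. \<not> x \<le> a) \<and> (\<forall>x y. a = inf x y \<longrightarrow> a = x \<or> a = y)"

definition Mi :: "'a::lattice set" where
  "Mi = {a. meet_irreducible a}"

definition antichain_in :: "'a::order set \<Rightarrow> 'a set \<Rightarrow> bool" where
  "antichain_in S P \<longleftrightarrow> S \<subseteq> P \<and> (\<forall>x\<in>S. \<forall>y\<in>S. x \<le> y \<longrightarrow> x = y)"

definition width_Mi :: "'a::{finite,lattice} itself \<Rightarrow> nat" where
  "width_Mi _ = Max {card S | S :: 'a set. antichain_in S Mi}"

definition boolean_interval :: "nat \<Rightarrow> 'a::order \<Rightarrow> 'a \<Rightarrow> bool" where
  "boolean_interval k a b \<longleftrightarrow> a \<le> b \<and>
     (\<exists>f. bij_betw f (Pow {..<k}) {a..b} \<and>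
          (\<forall>X Y. X \<subseteq> {..<k} \<longrightarrow> Y \<subseteq> {..<k} \<longrightarrow> (X \<subseteq> Y \<longleftrightarrow> f X \<le> f Y)))"

definition q :: "'a::{finite,order} itself \<Rightarrow> nat \<Rightarrow> nat" where
  "q _ k = card {(a :: 'a, b). boolean_interval k a b}"

definition covers :: "'a::order \<Rightarrow> 'a \<Rightarrow> bool" where
  "covers b a \<longleftrightarrow> a < b \<and> \<not> (\<exists>c. a < c \<and> c < b)"

definition up_degree :: "'a::{finite,order} \<Rightarrow> nat" where
  "up_degree a = card {b. covers b a}"

definition d_minus :: "'a::{finite,order} itself \<Rightarrow> nat \<Rightarrow> nat" where
  "d_minus _ k = card {a :: 'a. up_degree a = k}"

end

theory Submission
  imports Defs
begin

(*
  In a finite distributive lattice, the intervals [a, b] that are Boolean of rank k correspond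
  exactly to the k-element sets S of upper covers of a, via b = a \<squnion> \<Squnion>S: distributivity
  makes a cover lie below such a join only if it belongs to S, and every element of [a, b] is
  the join of the covers below it. Hence q_k is the sum over all a of (deg a choose k), which
  regroups by degree into the first identity; the second is its binomial inversion. The sums
  may stop at m because the upper covers of a give an antichain of the same size in Mi: for a
  cover b, an element maximal among those above a but not above b is meet-irreducible, and by
  distributivity it lies above every other cover of a.
*)

lemma covers_le_covers_imp_eq:
  fixes a b b' :: "'a::order"
  assumes "covers b a" "covers b' a" "b \<le> b'"
  shows "b = b'"
  using assms unfolding covers_def by (metis order.not_eq_order_implies_strict)

lemma covers_inf_eq:
  fixes a b c :: "'a::lattice"
  assumes "covers b a" "a \<le> c" "\<not> b \<le> c"
  shows "inf b c = a"
proof -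
  have "inf b c < b" using assms(3) by (metis inf.cobounded1 inf.cobounded2 order_less_le)
  moreover have "a \<le> inf b c" using assms(1,2) by (auto simp: covers_def)
  ultimately show ?thesis using assms(1) unfolding covers_def by (metis order_le_less)
qed

lemma inf_distinct_covers:
  fixes a b b' :: "'a::lattice"
  assumes "covers b a" "covers b' a" "b \<noteq> b'"
  shows "inf b b' = a"
  using assms covers_inf_eq covers_le_covers_imp_eq by (metis covers_def order_less_imp_le)

lemma cover_le_Sup_fin_covers_iff:
  fixes a x :: "'a::distrib_lattice"
  assumes "finite S" "S \<subseteq> {c. covers c a}" "covers x a"
  shows "x \<le> Sup_fin (insert a S) \<longleftrightarrow> x \<in> S"
proof
  assume le: "x \<le> Sup_fin (insert a S)"
  show "x \<in> S"
  proof (rule ccontr)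
    assume "x \<notin> S"
    then have "inf x s \<le> a" if "s \<in> insert a S" for s
      using that assms(2,3) inf_distinct_covers by fastforce
    then have "Sup_fin {inf x s |s. s \<in> insert a S} \<le> a"
      using assms(1) by (intro Sup_fin.boundedI) auto
    moreover have "inf x (Sup_fin (insert a S)) = x" using le by (rule inf_absorb1)
    ultimately have "x \<le> a" using assms(1) by (simp add: inf_Sup1_distrib)
    then show False using assms(3) by (simp add: covers_def leD)
  qed
qed (use assms(1) in \<open>simp add: Sup_fin.coboundedI\<close>)

lemma Sup_fin_covers_below:
  fixes a x :: "'a::distrib_lattice"
  assumes "finite S" "S \<subseteq> {c. covers c a}" "a \<le> x" "x \<le> Sup_fin (insert a S)"
  shows "x = Sup_fin (insert a {s\<in>S. s \<le> x})"
proof (rule antisym)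
  let ?J = "Sup_fin (insert a {s\<in>S. s \<le> x})"
  have J_ge: "t \<le> ?J" if "t \<in> insert a {s\<in>S. s \<le> x}" for t
    using that assms(1) by (simp add: Sup_fin.coboundedI)
  have "inf x s \<le> ?J" if s: "s \<in> insert a S" for s
  proof (cases "s \<in> S \<and> \<not> s \<le> x")
    case True
    then have "inf x s = a" using assms(2,3) covers_inf_eq by (metis inf_commute mem_Collect_eq subsetD)
    then show ?thesis using J_ge by simp
  next
    case False
    then show ?thesis using s J_ge by (blast intro: le_infI2)
  qed
  then have "Sup_fin {inf x s |s. s \<in> insert a S} \<le> ?J"
    using assms(1) by (intro Sup_fin.boundedI) auto
  moreover have "inf x (Sup_fin (insert a S)) = x" using assms(4) by (rule inf_absorb1)
  ultimately show "x \<le> ?J" using assms(1) by (simp add: inf_Sup1_distrib)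
  show "?J \<le> x" using assms(1,3) by (intro Sup_fin.boundedI) auto
qed

lemma Sup_fin_covers_le_iff:
  fixes a :: "'a::distrib_lattice"
  assumes "finite T" "finite T'" "T \<subseteq> {c. covers c a}" "T' \<subseteq> {c. covers c a}"
  shows "Sup_fin (insert a T) \<le> Sup_fin (insert a T') \<longleftrightarrow> T \<subseteq> T'"
proof
  assume "Sup_fin (insert a T) \<le> Sup_fin (insert a T')"
  then have "s \<le> Sup_fin (insert a T')" if "s \<in> T" for s
    using that assms(1) by (meson Sup_fin.coboundedI finite_insert insertCI order_trans)
  then show "T \<subseteq> T'" using assms(2-4) cover_le_Sup_fin_covers_iff by blast
qed (use assms(2) in \<open>auto intro: Sup_fin.subset_imp\<close>)

lemma interval_eq_Sup_fin_covers_image: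
  fixes a :: "'a::distrib_lattice"
  assumes "finite S" "S \<subseteq> {c. covers c a}"
  shows "{a..Sup_fin (insert a S)} = (\<lambda>T. Sup_fin (insert a T)) ` Pow S"
proof
  show "{a..Sup_fin (insert a S)} \<subseteq> (\<lambda>T. Sup_fin (insert a T)) ` Pow S"
    using Sup_fin_covers_below[OF assms] by (intro subsetI, simp) blast
  show "(\<lambda>T. Sup_fin (insert a T)) ` Pow S \<subseteq> {a..Sup_fin (insert a S)}"
  proof (intro image_subsetI atLeastAtMost_iff[THEN iffD2] conjI)
    fix T assume "T \<in> Pow S"
    then have "finite T" "insert a T \<subseteq> insert a S" using assms(1) finite_subset by auto
    then show "a \<le> Sup_fin (insert a T)" "Sup_fin (insert a T) \<le> Sup_fin (insert a S)"
      using assms(1) by (auto intro: Sup_fin.coboundedI Sup_fin.subset_imp)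
  qed
qed

definition Pow_interval_iso :: "('b set \<Rightarrow> 'a::order) \<Rightarrow> 'b set \<Rightarrow> 'a \<Rightarrow> 'a \<Rightarrow> bool" where
  "Pow_interval_iso f A a b \<longleftrightarrow>
     bij_betw f (Pow A) {a..b} \<and> (\<forall>X Y. X \<subseteq> A \<longrightarrow> Y \<subseteq> A \<longrightarrow> (X \<subseteq> Y \<longleftrightarrow> f X \<le> f Y))"

lemma boolean_interval_iff_Pow_interval_iso:
  "boolean_interval k a b \<longleftrightarrow> (\<exists>f. Pow_interval_iso f {..<k} a b)"
proof -
  have "a \<le> b" if "Pow_interval_iso f {..<k} a b" for f :: "nat set \<Rightarrow> 'a"
  proof -
    have "f {} \<in> {a..b}" using that by (auto simp: Pow_interval_iso_def bij_betw_def)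
    then show ?thesis by auto
  qed
  then show ?thesis unfolding boolean_interval_def Pow_interval_iso_def[symmetric] by blast
qed

lemma Pow_interval_iso_bounds:
  assumes "Pow_interval_iso f A a b"
  shows "f {} = a" "f A = b"
proof -
  have img: "f ` Pow A = {a..b}" and ord: "\<And>X Y. X \<subseteq> A \<Longrightarrow> Y \<subseteq> A \<Longrightarrow> X \<subseteq> Y \<longleftrightarrow> f X \<le> f Y"
    using assms by (auto simp: Pow_interval_iso_def bij_betw_def)
  have bounds: "f {} \<in> {a..b}" "f A \<in> {a..b}" using img by auto
  then have "a \<le> b" by (auto intro: order_trans)
  then have "a \<in> f ` Pow A" "b \<in> f ` Pow A" using img by auto
  then obtain X Y where "X \<subseteq> A" "f X = a" "Y \<subseteq> A" "f Y = b" by blast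
  then show "f {} = a" "f A = b" using bounds ord[of "{}" X] ord[of Y A] by auto
qed

lemma Pow_interval_iso_singleton_covers:
  assumes "Pow_interval_iso f A a b" "i \<in> A"
  shows "covers (f {i}) a"
proof -
  have img: "f ` Pow A = {a..b}" and inj: "inj_on f (Pow A)"
    and ord: "\<And>X Y. X \<subseteq> A \<Longrightarrow> Y \<subseteq> A \<Longrightarrow> X \<subseteq> Y \<longleftrightarrow> f X \<le> f Y"
    using assms(1) by (auto simp: Pow_interval_iso_def bij_betw_def)
  have f0: "f {} = a" and fA: "f A = b" using Pow_interval_iso_bounds[OF assms(1)] by auto
  have "a < f {i}"
    using ord[of "{}" "{i}"] inj_onD[OF inj, of "{i}" "{}"] assms(2) f0 by (auto simp: order_less_le)
  moreover have "\<not> c < f {i}" if "a < c" for c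
  proof
    assume "c < f {i}"
    moreover have "f {i} \<le> b" using ord[of "{i}" A] assms(2) fA by simp
    ultimately have "c \<in> f ` Pow A" using img that by auto
    then obtain X where X: "X \<subseteq> A" "c = f X" by blast
    then have "X \<subseteq> {i}" "X \<noteq> {i}" using ord[of X "{i}"] assms(2) \<open>c < f {i}\<close> by auto
    then have "X = {}" by auto
    then show False using X f0 \<open>a < c\<close> by simp
  qed
  ultimately show ?thesis unfolding covers_def by blast
qed

lemma boolean_interval_cardI:
  assumes "finite A" "Pow_interval_iso f A a b"
  shows "boolean_interval (card A) a b"
proof -
  have f: "bij_betw f (Pow A) {a..b}"
    and ord: "\<And>X Y. X \<subseteq> A \<Longrightarrow> Y \<subseteq> A \<Longrightarrow> X \<subseteq> Y \<longleftrightarrow> f X \<le> f Y"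
    using assms(2) by (auto simp: Pow_interval_iso_def)
  obtain g where g: "bij_betw g {..<card A} A"
    using ex_bij_betw_nat_finite[OF assms(1)] by (auto simp: atLeast0LessThan)
  have "Pow_interval_iso (f \<circ> image g) {..<card A} a b"
    unfolding Pow_interval_iso_def
  proof (intro conjI allI impI)
    show "bij_betw (f \<circ> image g) (Pow {..<card A}) {a..b}"
      by (rule bij_betw_trans[OF bij_betw_Pow[OF g] f])
    fix X Y assume X: "X \<subseteq> {..<card A}" and Y: "Y \<subseteq> {..<card A}"
    have "X \<subseteq> Y \<longleftrightarrow> g ` X \<subseteq> g ` Y"
    proof
      assume "g ` X \<subseteq> g ` Y"
      then show "X \<subseteq> Y" using X inj_on_image_mem_iff[OF bij_betw_imp_inj_on[OF g] _ Y] by blast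
    qed (rule image_mono)
    also have "\<dots> \<longleftrightarrow> f (g ` X) \<le> f (g ` Y)"
      using X Y g by (intro ord) (auto simp: bij_betw_def)
    finally show "X \<subseteq> Y \<longleftrightarrow> (f \<circ> image g) X \<le> (f \<circ> image g) Y" by simp
  qed
  then show ?thesis by (auto simp: boolean_interval_iff_Pow_interval_iso)
qed

lemma boolean_interval_Sup_fin_covers:
  fixes a :: "'a::distrib_lattice"
  assumes "finite S" "S \<subseteq> {c. covers c a}"
  shows "boolean_interval (card S) a (Sup_fin (insert a S))"
proof (rule boolean_interval_cardI[OF assms(1)])
  let ?J = "\<lambda>T. Sup_fin (insert a T)"
  have ord: "T \<subseteq> T' \<longleftrightarrow> ?J T \<le> ?J T'" if "T \<subseteq> S" "T' \<subseteq> S" for T T'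
  proof -
    have "finite T" "finite T'" using that assms(1) finite_subset by auto
    then show ?thesis using that assms(2) Sup_fin_covers_le_iff[of T T' a] by auto
  qed
  then have "inj_on ?J (Pow S)" by (intro inj_onI) (simp add: order_antisym)
  moreover have "?J ` Pow S = {a..?J S}" using interval_eq_Sup_fin_covers_image[OF assms] by simp
  ultimately show "Pow_interval_iso ?J S a (?J S)"
    unfolding Pow_interval_iso_def bij_betw_def using ord by blast
qed

lemma boolean_intervalE:
  fixes a b :: "'a::lattice"
  assumes "boolean_interval k a b"
  obtains S where "S \<subseteq> {c. covers c a}" "card S = k" "b = Sup_fin (insert a S)"
proof -
  obtain f where iso: "Pow_interval_iso f {..<k} a b"
    using assms by (auto simp: boolean_interval_iff_Pow_interval_iso)
  have img: "f ` Pow {..<k} = {a..b}" and inj: "inj_on f (Pow {..<k})"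
    and ord: "\<And>X Y. X \<subseteq> {..<k} \<Longrightarrow> Y \<subseteq> {..<k} \<Longrightarrow> X \<subseteq> Y \<longleftrightarrow> f X \<le> f Y"
    using iso by (auto simp: Pow_interval_iso_def bij_betw_def)
  have f0: "f {} = a" and fk: "f {..<k} = b" using Pow_interval_iso_bounds[OF iso] by auto
  define S where "S = (\<lambda>i. f {i}) ` {..<k}"
  have "inj_on (\<lambda>i. f {i}) {..<k}" using inj by (auto intro!: inj_onI dest: inj_onD)
  then have "card S = k" by (simp add: S_def card_image)
  moreover have "S \<subseteq> {c. covers c a}"
    using Pow_interval_iso_singleton_covers[OF iso] by (auto simp: S_def)
  moreover have "b = Sup_fin (insert a S)"
  proof -
    have "Sup_fin (insert a S) \<in> {a..b}"
      using ord[of _ "{..<k}"] f0 fk ord[of "{}" "{..<k}"]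
      by (auto simp: S_def intro!: Sup_fin.coboundedI Sup_fin.boundedI)
    then have "Sup_fin (insert a S) \<in> f ` Pow {..<k}" using img by simp
    then obtain Y where Y: "Y \<subseteq> {..<k}" "Sup_fin (insert a S) = f Y" by auto
    have "i \<in> Y" if "i < k" for i
    proof -
      have "f {i} \<le> Sup_fin (insert a S)" using that by (simp add: S_def Sup_fin.coboundedI)
      then have "f {i} \<le> f Y" using Y(2) by simp
      then show ?thesis using ord[of "{i}" Y] Y(1) that by simp
    qed
    then have "Y = {..<k}" using Y(1) by auto
    then show ?thesis using Y(2) fk by simp
  qed
  ultimately show ?thesis using that by blast
qed

lemma card_boolean_intervals_above:
  fixes a :: "'a::{finite,distrib_lattice}"
  shows "card {b. boolean_interval k a b} = up_degree a choose k"
proof -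
  let ?C = "{c. covers c a}" and ?J = "\<lambda>T. Sup_fin (insert a T)"
  let ?F = "{S. S \<subseteq> ?C \<and> card S = k}"
  have "{b. boolean_interval k a b} = ?J ` ?F"
  proof (intro subset_antisym subsetI)
    fix b assume "b \<in> {b. boolean_interval k a b}"
    then obtain S where "S \<in> ?F" "b = ?J S"
      using boolean_intervalE[of k a b] by auto
    then show "b \<in> ?J ` ?F" by blast
  next
    fix b assume "b \<in> ?J ` ?F"
    then obtain S where "S \<subseteq> ?C" "card S = k" "b = ?J S" by blast
    then show "b \<in> {b. boolean_interval k a b}"
      using boolean_interval_Sup_fin_covers[of S a] by simp
  qed
  moreover have "inj_on ?J ?F"
  proof (rule inj_onI)
    fix S T assume "S \<in> ?F" "T \<in> ?F" "?J S = ?J T"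
    then show "S = T" using Sup_fin_covers_le_iff[of S T a] Sup_fin_covers_le_iff[of T S a] by auto
  qed
  ultimately have "card {b. boolean_interval k a b} = card ?F" by (simp add: card_image)
  also have "\<dots> = up_degree a choose k" by (simp add: up_degree_def n_subsets)
  finally show ?thesis .
qed

lemma meet_irreducibleI_maximal_avoiding:
  fixes b m :: "'a::lattice"
  assumes "\<not> b \<le> m" "\<And>z. m < z \<Longrightarrow> b \<le> z"
  shows "meet_irreducible m"
  unfolding meet_irreducible_def
proof (intro conjI allI impI)
  show "\<exists>x. \<not> x \<le> m" using assms(1) by blast
  fix x y assume m: "m = inf x y"
  show "m = x \<or> m = y"
  proof (rule ccontr)
    assume "\<not> (m = x \<or> m = y)"
    then have "m < x" "m < y" using m by (auto simp: order_less_le)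
    then have "b \<le> inf x y" using assms(2) by simp
    then show False using assms(1) m by simp
  qed
qed

lemma cover_le_maximal_avoiding:
  fixes a b b' m :: "'a::distrib_lattice"
  assumes "covers b a" "covers b' a" "b \<noteq> b'"
    and "a \<le> m" "\<not> b \<le> m" "\<And>z. m < z \<Longrightarrow> b \<le> z"
  shows "b' \<le> m"
proof (rule ccontr)
  assume "\<not> b' \<le> m"
  then have "m < sup m b'" by (metis sup.cobounded1 sup.cobounded2 order_less_le)
  then have "b = inf b (sup m b')" using assms(6) by (simp add: inf_absorb1)
  also have "\<dots> = sup (inf b m) (inf b b')" by (rule inf_sup_distrib1)
  also have "\<dots> = a" using covers_inf_eq[OF assms(1,4,5)] inf_distinct_covers[OF assms(1-3)] by simp
  finally show False using assms(1) by (simp add: covers_def)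
qed

lemma ex_maximal_avoiding:
  fixes a b :: "'a::{finite,order}"
  assumes "\<not> b \<le> a"
  obtains m where "a \<le> m" "\<not> b \<le> m" "\<And>z. m < z \<Longrightarrow> b \<le> z"
proof -
  let ?P = "{y. a \<le> y \<and> \<not> b \<le> y}"
  have "a \<in> ?P" using assms by simp
  then have "\<exists>m\<in>?P. \<forall>z\<in>?P. m \<le> z \<longrightarrow> m = z" by (intro finite_has_maximal) auto
  then obtain m where m: "m \<in> ?P" and max: "\<forall>z\<in>?P. m \<le> z \<longrightarrow> m = z" by blast
  have "b \<le> z" if "m < z" for z
  proof (rule ccontr)
    assume "\<not> b \<le> z"
    moreover have "a \<le> z" using m that by (auto intro: order.strict_implies_order order_trans)
    ultimately show False using max that by auto
  qed
  then show ?thesis using m that by blast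
qed

lemma card_le_width_Mi:
  fixes S :: "'a::{finite,lattice} set"
  assumes "antichain_in S Mi"
  shows "card S \<le> width_Mi TYPE('a)"
  unfolding width_Mi_def using assms by (intro Max_ge) auto

lemma up_degree_le_width_Mi:
  fixes a :: "'a::{finite,distrib_lattice}"
  shows "up_degree a \<le> width_Mi TYPE('a)"
proof -
  let ?C = "{b. covers b a}"
  have "\<exists>m. a \<le> m \<and> \<not> b \<le> m \<and> (\<forall>z. m < z \<longrightarrow> b \<le> z)" if "b \<in> ?C" for b
  proof -
    have "\<not> b \<le> a" using that by (auto simp: covers_def)
    then show ?thesis by (metis ex_maximal_avoiding)
  qed
  then obtain M where M: "\<And>b. b \<in> ?C \<Longrightarrow> a \<le> M b \<and> \<not> b \<le> M b \<and> (\<forall>z. M b < z \<longrightarrow> b \<le> z)"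
    by metis
  have M_le_imp_eq: "b = b'" if "b \<in> ?C" "b' \<in> ?C" "M b \<le> M b'" for b b'
  proof (rule ccontr)
    assume "b \<noteq> b'"
    then have "b' \<le> M b" using that M cover_le_maximal_avoiding by blast
    then show False using that M order_trans by blast
  qed
  then have "inj_on M ?C" by (intro inj_onI) simp
  have "antichain_in (M ` ?C) Mi"
    unfolding antichain_in_def
  proof (intro conjI ballI impI subsetI)
    fix x assume "x \<in> M ` ?C"
    then obtain b where "b \<in> ?C" "x = M b" by blast
    then show "x \<in> Mi"
      using M[of b] meet_irreducibleI_maximal_avoiding[of b "M b"] by (simp add: Mi_def)
  next
    fix x y assume "x \<in> M ` ?C" "y \<in> M ` ?C" "x \<le> y"
    then obtain b b' where "b \<in> ?C" "b' \<in> ?C" "x = M b" "y = M b'" "M b \<le> M b'" by blast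
    then show "x = y" using M_le_imp_eq[of b b'] by simp
  qed
  have "up_degree a = card (M ` ?C)" using \<open>inj_on M ?C\<close> by (simp add: up_degree_def card_image)
  also have "\<dots> \<le> width_Mi TYPE('a)" using \<open>antichain_in (M ` ?C) Mi\<close> by (rule card_le_width_Mi)
  finally show ?thesis .
qed

lemma q_eq_sum_choose_up_degree:
  "q TYPE('a::{finite,distrib_lattice}) k = (\<Sum>a\<in>UNIV. up_degree (a::'a) choose k)"
proof -
  have "{(a :: 'a, b). boolean_interval k a b} = (SIGMA a:UNIV. {b. boolean_interval k a b})" by auto
  then have "q TYPE('a) k = card (SIGMA a:(UNIV :: 'a set). {b. boolean_interval k a b})"
    by (simp add: q_def)
  also have "\<dots> = (\<Sum>a\<in>UNIV. card {b. boolean_interval k (a::'a) b})" by (rule card_SigmaI) auto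
  finally show ?thesis by (simp add: card_boolean_intervals_above)
qed

lemma d_minus_eq_0:
  assumes "width_Mi TYPE('a::{finite,distrib_lattice}) < j"
  shows "d_minus TYPE('a) j = 0"
  using assms up_degree_le_width_Mi[where 'a='a] by (auto simp: d_minus_def not_le[symmetric])

lemma q_eq_sum_d_minus:
  "q TYPE('a::{finite,distrib_lattice}) k = (\<Sum>j=k..width_Mi TYPE('a). (j choose k) * d_minus TYPE('a) j)"
proof -
  let ?m = "width_Mi TYPE('a)"
  have "(\<Sum>j\<in>{0..?m}. \<Sum>a\<in>{a::'a. a \<in> UNIV \<and> up_degree a = j}. up_degree a choose k)
      = (\<Sum>a\<in>UNIV. up_degree (a::'a) choose k)"
    by (rule sum.group) (auto simp: up_degree_le_width_Mi)
  then have "q TYPE('a) k = (\<Sum>j=0..?m. \<Sum>a\<in>{a::'a. up_degree a = j}. up_degree a choose k)"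
    by (simp add: q_eq_sum_choose_up_degree)
  also have "\<dots> = (\<Sum>j=0..?m. \<Sum>a\<in>{a::'a. up_degree a = j}. j choose k)"
    by (intro sum.cong) auto
  also have "\<dots> = (\<Sum>j=0..?m. (j choose k) * d_minus TYPE('a) j)"
    by (simp add: d_minus_def mult.commute)
  also have "\<dots> = (\<Sum>j=k..?m. (j choose k) * d_minus TYPE('a) j)"
    by (rule sum.mono_neutral_right) auto
  finally show ?thesis .
qed

lemma sum_alternating_choose:
  fixes n N :: nat
  assumes "n \<le> N"
  shows "(\<Sum>t=0..N. (-1)^t * of_nat (n choose t) :: 'a::comm_ring_1) = (if n = 0 then 1 else 0)"
proof -
  have "(\<Sum>t=0..N. (-1)^t * of_nat (n choose t) :: 'a) = (\<Sum>t\<le>n. (-1)^t * of_nat (n choose t))"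
    unfolding atLeast0AtMost using assms by (intro sum.mono_neutral_right) (auto simp: binomial_eq_0)
  then show ?thesis using choose_alternating_sum[of n, where 'a='a] by simp
qed

lemma sum_alternating_choose_mult:
  fixes i k m :: nat
  assumes "k \<le> i" "i \<le> m"
  shows "(\<Sum>j=k..m. (-1)^(j-k) * of_nat (j choose k) * of_nat (i choose j) :: 'a::comm_ring_1)
       = (if i = k then 1 else 0)"
proof -
  have "(\<Sum>j=k..m. (-1)^(j-k) * of_nat (j choose k) * of_nat (i choose j) :: 'a)
      = of_nat (i choose k) * (\<Sum>j=k..m. (-1)^(j-k) * of_nat ((i-k) choose (j-k)))"
    unfolding sum_distrib_left
  proof (rule sum.cong)
    fix j assume j: "j \<in> {k..m}"
    show "(-1)^(j-k) * of_nat (j choose k) * of_nat (i choose j)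
        = of_nat (i choose k) * ((-1)^(j-k) * of_nat ((i-k) choose (j-k)) :: 'a)"
    proof (cases "j \<le> i")
      case True
      then have "(j choose k) * (i choose j) = (i choose k) * ((i-k) choose (j-k))"
        using j choose_mult[of k j i] by (simp add: mult.commute)
      then have "of_nat (j choose k) * of_nat (i choose j) = (of_nat (i choose k) * of_nat ((i-k) choose (j-k)) :: 'a)"
        by (metis of_nat_mult)
      then show ?thesis by (simp add: mult.assoc mult.left_commute)
    qed (use j assms in \<open>simp add: binomial_eq_0\<close>)
  qed simp
  also have "(\<Sum>j=k..m. (-1)^(j-k) * of_nat ((i-k) choose (j-k)) :: 'a)
      = (\<Sum>t=0..m-k. (-1)^t * of_nat ((i-k) choose t))"
    using sum.shift_bounds_cl_nat_ivl[of "\<lambda>j. (-1)^(j-k) * of_nat ((i-k) choose (j-k)) :: 'a" 0 k "m-k"] assms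
    by simp
  also have "\<dots> = (if i - k = 0 then 1 else 0)" using assms by (intro sum_alternating_choose) simp
  finally show ?thesis using assms by auto
qed

lemma binomial_inversion:
  fixes d Q :: "nat \<Rightarrow> 'a::comm_ring_1"
  assumes Q: "\<And>j. k \<le> j \<Longrightarrow> j \<le> m \<Longrightarrow> Q j = (\<Sum>i=j..m. of_nat (i choose j) * d i)"
    and "k \<le> m"
  shows "(\<Sum>j=k..m. (-1)^(j-k) * of_nat (j choose k) * Q j) = d k"
proof -
  have Q': "Q j = (\<Sum>i=k..m. of_nat (i choose j) * d i)" if "j \<in> {k..m}" for j
    using that by (simp add: Q) (intro sum.mono_neutral_left, auto simp: binomial_eq_0)
  have "(\<Sum>j=k..m. (-1)^(j-k) * of_nat (j choose k) * Q j)
      = (\<Sum>j=k..m. \<Sum>i=k..m. (-1)^(j-k) * of_nat (j choose k) * of_nat (i choose j) * d i)"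
    by (simp add: Q' sum_distrib_left mult.assoc)
  also have "\<dots> = (\<Sum>i=k..m. \<Sum>j=k..m. (-1)^(j-k) * of_nat (j choose k) * of_nat (i choose j) * d i)"
    by (rule sum.swap)
  also have "\<dots> = (\<Sum>i=k..m. (\<Sum>j=k..m. (-1)^(j-k) * of_nat (j choose k) * of_nat (i choose j)) * d i)"
    by (simp add: sum_distrib_right)
  also have "\<dots> = (\<Sum>i=k..m. if i = k then d i else 0)"
    by (intro sum.cong refl) (simp add: sum_alternating_choose_mult)
  also have "\<dots> = d k" using assms(2) by simp
  finally show ?thesis .
qed

theorem proposition2:
  fixes k :: nat
  defines "m \<equiv> width_Mi TYPE('a::{finite,distrib_lattice})"
  shows "q TYPE('a) k = (\<Sum>j=k..m. (j choose k) * d_minus TYPE('a) j)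
       \<and> int (d_minus TYPE('a) k) = (\<Sum>j=k..m. (-1)^(j-k) * int (j choose k) * int (q TYPE('a) j))"
proof
  show q: "q TYPE('a) k = (\<Sum>j=k..m. (j choose k) * d_minus TYPE('a) j)" for k
    unfolding m_def by (rule q_eq_sum_d_minus)
  show "int (d_minus TYPE('a) k) = (\<Sum>j=k..m. (-1)^(j-k) * int (j choose k) * int (q TYPE('a) j))"
  proof (cases "k \<le> m")
    case True
    have "int (q TYPE('a) j) = (\<Sum>i=j..m. of_nat (i choose j) * int (d_minus TYPE('a) i))" for j
      using q[of j] by simp
    then show ?thesis
      using binomial_inversion[of k m "\<lambda>j. int (q TYPE('a) j)" "\<lambda>i. int (d_minus TYPE('a) i)"] True
      by simp
  next
    case False
    then show ?thesis using d_minus_eq_0[where 'a='a, of k] by (simp add: m_def)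
  qed
qed

end
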